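(* Assume $\frac\pi2<\omega<\pi$ and $q>0$. For every $(a,f,g)\in\mathcal C$ there is a function $\tilde f$ with $0\le\tilde f(r)\le\frac\pi2$ for all $r\ge0$ such that $(a,\tilde f,g)\in\mathcal C$ and $L(a,\tilde f,g)\le L(a,f,g)$. Consequently, in minimizing $L$ over $\mathcal C$ one may restrict to functions $f$ with $0\le f\le\frac\pi2$.
   Context: Fix $\kappa>0$, $\omega\in(\frac\pi2,\pi)$, $q>0$; $'=d/dr$. Define $\mathcal E_1=2\big(2(a')^2+\frac{(a^2-1)^2}{r^2}\big)+\frac12\big(r^2(f')^2+2a^2\sin^2f\big)+2\kappa a^2\sin^2f\big(2(f')^2+\frac{a^2\sin^2f}{r^2}\big)$, $\mathcal E_2=r^2(g')^2+2a^2g^2$, $L(a,f,g)=\int_0^\infty(\mathcal E_1-\mathcal E_2)\,dr$, $E(a,f,g)=\int_0^\infty(\mathcal E_1+\mathcal E_2)\,dr$, and for functions $a,G$, $E_2(a,G)=\int_0^\infty(r^2(G')^2+2a^2G^2)\,dr$. The admissible set $\mathcal A$ consists of triples $(a,f,g)$ of continuous functions on $[0,\infty)$ that are absolutely continuous on every compact subinterval of $(0,\infty)$, satisfy $a(0)=1$, $\lim_{r\to\infty}a(r)=0$, $f(0)=0$, $\lim_{r\to\infty}f(r)=\pi-\omega$, $\lim_{r\to\infty}g(r)=q$, and have $E(a,f,g)<\infty$. The constrained class $\mathcal C$ consists of those $(a,f,g)\in\mathcal A$ such that $\int_0^\infty(r^2g'G'+2a^2gG)\,dr=0$ for every function $G$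 on $(0,\infty)$, absolutely continuous on compact subintervals of $(0,\infty)$, with $G(r)\to0$ as $r\to\infty$ and $E_2(a,G)<\infty$. *)

theory Defs
  imports "HOL-Analysis.Analysis"
begin

definition abs_cont_on :: "real set \<Rightarrow> (real \<Rightarrow> real) \<Rightarrow> bool" where
  "abs_cont_on S u \<longleftrightarrow>
     (\<forall>\<epsilon>>0. \<exists>\<delta>>0. \<forall>(n::nat) (x::nat \<Rightarrow> real) (y::nat \<Rightarrow> real).
        (\<forall>i<n. x i \<le> y i \<and> {x i..y i} \<subseteq> S) \<and>
        (\<forall>i<n. \<forall>j<n. i \<noteq> j \<longrightarrow> {x i<..<y i} \<inter> {x j<..<y j} = {}) \<and>
        (\<Sum>i<n. y i - x i) < \<delta>
        \<longrightarrow> (\<Sum>i<n. \<bar>u (y i) - u (x i)\<bar>) < \<epsilon>)"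

definition loc_abs_cont :: "(real \<Rightarrow> real) \<Rightarrow> bool" where
  "loc_abs_cont u \<longleftrightarrow> (\<forall>c d. 0 < c \<longrightarrow> c \<le> d \<longrightarrow> abs_cont_on {c..d} u)"

(* energy densities; ' is d/dr, realised by deriv (defined a.e. for AC functions) *)
definition E1dens :: "real \<Rightarrow> (real \<Rightarrow> real) \<Rightarrow> (real \<Rightarrow> real) \<Rightarrow> real \<Rightarrow> real" where
  "E1dens \<kappa> a f r =
     2 * (2 * (deriv a r)\<^sup>2 + ((a r)\<^sup>2 - 1)\<^sup>2 / r\<^sup>2)
     + 1/2 * (r\<^sup>2 * (deriv f r)\<^sup>2 + 2 * (a r)\<^sup>2 * (sin (f r))\<^sup>2)
     + 2 * \<kappa> * (a r)\<^sup>2 * (sin (f r))\<^sup>2 *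
         (2 * (deriv f r)\<^sup>2 + (a r)\<^sup>2 * (sin (f r))\<^sup>2 / r\<^sup>2)"

definition E2dens :: "(real \<Rightarrow> real) \<Rightarrow> (real \<Rightarrow> real) \<Rightarrow> real \<Rightarrow> real" where
  "E2dens a g r = r\<^sup>2 * (deriv g r)\<^sup>2 + 2 * (a r)\<^sup>2 * (g r)\<^sup>2"

definition Lfun :: "real \<Rightarrow> (real \<Rightarrow> real) \<Rightarrow> (real \<Rightarrow> real) \<Rightarrow> (real \<Rightarrow> real) \<Rightarrow> real" where
  "Lfun \<kappa> a f g = (LINT r:{0<..}|lebesgue. E1dens \<kappa> a f r - E2dens a g r)"

definition Efun :: "real \<Rightarrow> (real \<Rightarrow> real) \<Rightarrow> (real \<Rightarrow> real) \<Rightarrow> (real \<Rightarrow> real) \<Rightarrow> ennreal" where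
  "Efun \<kappa> a f g = (\<integral>\<^sup>+ r. ennreal (E1dens \<kappa> a f r + E2dens a g r) * indicator {0<..} r \<partial>lebesgue)"

definition E2fun :: "(real \<Rightarrow> real) \<Rightarrow> (real \<Rightarrow> real) \<Rightarrow> ennreal" where
  "E2fun a G = (\<integral>\<^sup>+ r. ennreal (E2dens a G r) * indicator {0<..} r \<partial>lebesgue)"

definition admissible :: "real \<Rightarrow> real \<Rightarrow> real \<Rightarrow> (real \<Rightarrow> real) \<Rightarrow> (real \<Rightarrow> real) \<Rightarrow> (real \<Rightarrow> real) \<Rightarrow> bool" where
  "admissible \<kappa> \<omega> q a f g \<longleftrightarrow>
     continuous_on {0..} a \<and> continuous_on {0..} f \<and> continuous_on {0..} g \<and>
     loc_abs_cont a \<and> loc_abs_cont f \<and> loc_abs_cont g \<and>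
     a 0 = 1 \<and> (a \<longlongrightarrow> 0) at_top \<and>
     f 0 = 0 \<and> (f \<longlongrightarrow> pi - \<omega>) at_top \<and>
     (g \<longlongrightarrow> q) at_top \<and>
     Efun \<kappa> a f g < \<infinity>"

definition constrained :: "real \<Rightarrow> real \<Rightarrow> real \<Rightarrow> (real \<Rightarrow> real) \<Rightarrow> (real \<Rightarrow> real) \<Rightarrow> (real \<Rightarrow> real) \<Rightarrow> bool" where
  "constrained \<kappa> \<omega> q a f g \<longleftrightarrow>
     admissible \<kappa> \<omega> q a f g \<and>
     (\<forall>G. loc_abs_cont G \<and> (G \<longlongrightarrow> 0) at_top \<and> E2fun a G < \<infinity> \<longrightarrow>
        (LINT r:{0<..}|lebesgue. r\<^sup>2 * deriv g r * deriv G r + 2 * (a r)\<^sup>2 * g r * G r) = 0)"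

end

theory Submission
  imports Defs
begin

(* Let pi_fold x be the distance from x to the nearest multiple of pi. It is 1-Lipschitz, takes
   values in [0, pi/2], is the identity on [0, pi/2] and satisfies sin^2 (pi_fold x) = sin^2 x.
   For ft = pi_fold o f we therefore have sin^2 ft = sin^2 f, and (ft')^2 = (f')^2 except where
   f takes a "corner" value (a multiple of pi/2) with nonzero derivative: away from corners the
   fold is locally affine with slope +-1, and at a corner value reached with zero derivative (or
   no derivative) both derivatives vanish (or fail to exist) together. The exceptional points are
   isolated, hence countable and Lebesgue-null, so E1, E and L are unchanged. Since pi/2 < omega
   < pi, the boundary value pi - omega lies in [0, pi/2] and is fixed by the fold; continuity and
   absolute continuity survive composition with a 1-Lipschitz map; and the constraint defining
   the class C does not involve f. Hence (a, ft, g) is again in C with L equal to L(a, f, g). *)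

definition pi_fold :: "real \<Rightarrow> real" where
  "pi_fold x = \<bar>x - pi * of_int \<lfloor>x/pi + 1/2\<rfloor>\<bar>"

lemma pi_fold_nearest_bounds:
  "- (pi/2) \<le> x - pi * of_int \<lfloor>x/pi + 1/2\<rfloor>" "x - pi * of_int \<lfloor>x/pi + 1/2\<rfloor> < pi/2"
proof -
  define m where "m = \<lfloor>x/pi + 1/2\<rfloor>"
  have "of_int m - 1/2 \<le> x/pi" "x/pi < of_int m + 1/2" unfolding m_def by linarith+
  then have "(of_int m - 1/2) * pi \<le> x" "x < (of_int m + 1/2) * pi"
    by (simp_all add: pos_le_divide_eq pos_divide_less_eq)
  then show "- (pi/2) \<le> x - pi * of_int \<lfloor>x/pi + 1/2\<rfloor>" "x - pi * of_int \<lfloor>x/pi + 1/2\<rfloor> < pi/2"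
    unfolding m_def[symmetric] by (simp_all add: algebra_simps)
qed

lemma pi_fold_range: "0 \<le> pi_fold x" "pi_fold x \<le> pi/2"
  using pi_fold_nearest_bounds[of x] unfolding pi_fold_def by arith+

lemma pi_fold_attained: "\<exists>k::int. pi_fold x = \<bar>x - pi * of_int k\<bar>"
  by (auto simp: pi_fold_def)

lemma multiples_of_pi_apart:
  assumes "m \<noteq> k"
  shows "pi \<le> \<bar>x - pi * of_int m\<bar> + \<bar>x - pi * of_int k\<bar>"
proof -
  have "1 \<le> \<bar>real_of_int m - of_int k\<bar>" using assms by linarith
  then have "pi \<le> \<bar>pi * of_int m - pi * of_int k\<bar>"
    by (simp add: abs_mult flip: right_diff_distrib)
  then show ?thesis by linarith
qed

lemma pi_fold_le: "pi_fold x \<le> \<bar>x - pi * of_int k\<bar>"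
proof -
  define m where "m = \<lfloor>x/pi + 1/2\<rfloor>"
  have fm: "pi_fold x = \<bar>x - pi * of_int m\<bar>" by (simp add: pi_fold_def m_def)
  show ?thesis
  proof (cases "m = k")
    case False
    then show ?thesis using multiples_of_pi_apart[of m k x] fm pi_fold_range[of x] by linarith
  qed (use fm in simp)
qed

lemma pi_fold_eq:
  assumes "\<bar>x - pi * of_int k\<bar> \<le> pi/2"
  shows "pi_fold x = \<bar>x - pi * of_int k\<bar>"
proof -
  obtain m where fm: "pi_fold x = \<bar>x - pi * of_int m\<bar>" using pi_fold_attained by blast
  have "\<bar>x - pi * of_int k\<bar> \<le> pi_fold x"
  proof (cases "m = k")
    case False
    then show ?thesis using multiples_of_pi_apart[of m k x] fm assms by linarith
  qed (use fm in simp)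
  then show ?thesis using pi_fold_le[of x k] by linarith
qed

lemma pi_fold_id: "0 \<le> x \<Longrightarrow> x \<le> pi/2 \<Longrightarrow> pi_fold x = x"
  using pi_fold_eq[of x 0] by simp

(* Being a distance function, the fold is 1-Lipschitz. *)
lemma pi_fold_nonexpansive: "\<bar>pi_fold x - pi_fold y\<bar> \<le> \<bar>x - y\<bar>"
proof -
  have "pi_fold x \<le> \<bar>x - y\<bar> + pi_fold y" for x y
  proof -
    obtain k where k: "pi_fold y = \<bar>y - pi * of_int k\<bar>" using pi_fold_attained by blast
    show ?thesis using pi_fold_le[of x k] k by linarith
  qed
  from this[of x y] this[of y x] show ?thesis by linarith
qed

lemma continuous_pi_fold: "continuous_on UNIV pi_fold"
  unfolding continuous_on_iff
  by (metis dist_real_def pi_fold_nonexpansive le_less_trans)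

lemma sin_sq_pi_fold: "(sin (pi_fold x))\<^sup>2 = (sin x)\<^sup>2"
proof -
  obtain k where k: "pi_fold x = \<bar>x - pi * of_int k\<bar>" using pi_fold_attained by blast
  have s0: "sin (pi * of_int k) = 0" using sin_times_pi_eq_0[of "of_int k"] by (simp add: mult.commute)
  then have c1: "(cos (pi * of_int k))\<^sup>2 = 1" using sin_cos_squared_add[of "pi * of_int k"] by simp
  have "(sin \<bar>y\<bar>)\<^sup>2 = (sin y)\<^sup>2" for y :: real by (cases "0 \<le> y") simp_all
  then have "(sin (pi_fold x))\<^sup>2 = (sin (x - pi * of_int k))\<^sup>2" unfolding k .
  also have "\<dots> = (sin x)\<^sup>2" by (simp add: sin_diff s0 power_mult_distrib c1)
  finally show ?thesis .
qed

(* Corners: the points where the fold is not locally affine (values 0 and pi/2). *)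
definition fold_corner :: "real \<Rightarrow> bool" where
  "fold_corner u \<longleftrightarrow> pi_fold u = 0 \<or> pi_fold u = pi/2"

lemma pi_fold_near_corner:
  assumes "fold_corner x0" "\<bar>x - x0\<bar> \<le> pi/2"
  shows "\<bar>pi_fold x - pi_fold x0\<bar> = \<bar>x - x0\<bar>"
proof -
  obtain k where k: "pi_fold x0 = \<bar>x0 - pi * of_int k\<bar>" using pi_fold_attained by blast
  consider "pi_fold x0 = 0" | "pi_fold x0 = pi/2" using assms(1) unfolding fold_corner_def by blast
  then show ?thesis
  proof cases
    case 1
    then have "x0 = pi * of_int k" using k by simp
    then show ?thesis using pi_fold_eq[of x k] assms(2) 1 by simp
  next
    case 2
    then have "x0 = pi * of_int k + pi/2 \<or> x0 = pi * of_int (k - 1) + pi/2"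
      using k by (auto simp: algebra_simps abs_if split: if_splits)
    then obtain j where j: "x0 = pi * of_int j + pi/2" by blast
    show ?thesis
    proof (cases "x \<le> x0")
      case True
      then show ?thesis using pi_fold_eq[of x j] j assms(2) 2 by auto
    next
      case False
      then show ?thesis using pi_fold_eq[of x "j + 1"] j assms(2) 2 by (auto simp: algebra_simps)
    qed
  qed
qed

lemma fold_corners_separated:
  assumes "fold_corner u" "fold_corner v" "\<bar>u - v\<bar> < pi/2"
  shows "u = v"
proof -
  have "\<bar>pi_fold u - pi_fold v\<bar> < pi/2" using pi_fold_near_corner[OF assms(2), of u] assms(3) by simp
  then have "pi_fold u = pi_fold v" using assms(1,2) unfolding fold_corner_def by auto
  then show ?thesis using pi_fold_near_corner[OF assms(2), of u] assms(3) by simp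
qed

lemma pi_fold_locally_affine:
  assumes "\<not> fold_corner x0"
  obtains e s c where "e > 0" "\<bar>s\<bar> = 1" "\<And>x. \<bar>x - x0\<bar> < e \<Longrightarrow> pi_fold x = s * x + c"
proof -
  obtain k where k: "pi_fold x0 = \<bar>x0 - pi * of_int k\<bar>" using pi_fold_attained by blast
  define s where "s = sgn (x0 - pi * of_int k)"
  define e where "e = min (pi_fold x0) (pi/2 - pi_fold x0)"
  have pos: "0 < pi_fold x0" "pi_fold x0 < pi/2"
    using assms pi_fold_range[of x0] unfolding fold_corner_def by auto
  have "pi_fold x = s * x + (- s * pi * of_int k)" if "\<bar>x - x0\<bar> < e" for x
  proof -
    have "\<bar>x - pi * of_int k\<bar> \<le> pi/2" using that k pos unfolding e_def by linarith
    moreover have "sgn (x - pi * of_int k) = s"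
      using that k pos unfolding e_def s_def by (auto simp: sgn_if)
    ultimately
    show ?thesis using pi_fold_eq[of x k] by (simp add: abs_sgn algebra_simps)
  qed
  moreover have "\<bar>s\<bar> = 1" "e > 0" using pos k unfolding s_def e_def by (auto simp: abs_sgn_eq)
  ultimately show ?thesis using that by blast
qed

lemma eventually_close_of_isCont:
  fixes f :: "real \<Rightarrow> real"
  assumes "isCont f r" "e > 0"
  shows "eventually (\<lambda>y. \<bar>f y - f r\<bar> < e) (nhds r)"
  using tendstoD[of f "f r" "nhds r" e] assms
  by (simp add: isCont_def tendsto_at_iff_tendsto_nhds dist_real_def)

(* If the derivatives of G and F at r correspond up to a sign s, then deriv G and deriv F
   have equal squares, also in the case where neither function is differentiable at r. *)
lemma deriv_sq_eq_if_DERIV_iff: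
  fixes F G :: "real \<Rightarrow> real"
  assumes iff: "\<And>D. DERIV G r :> D \<longleftrightarrow> DERIV F r :> s * D" and s: "\<bar>s\<bar> = 1"
  shows "(deriv G r)\<^sup>2 = (deriv F r)\<^sup>2"
proof (cases "\<exists>D. DERIV G r :> D")
  case True
  then obtain D where D: "DERIV G r :> D" by blast
  then have "deriv G r = D" "deriv F r = s * D" using iff by (simp_all add: DERIV_imp_deriv)
  moreover have "s * s = 1" using s abs_mult_self_eq[of s] by simp
  ultimately show ?thesis by (simp add: power2_eq_square algebra_simps)
next
  case False
  have "s * (s * E) = E" for E using s abs_mult_self_eq[of s] by (simp flip: mult.assoc)
  then have "\<not> (\<exists>E. DERIV F r :> E)" using False iff by metis
  then have "(\<lambda>D. DERIV G r :> D) = (\<lambda>D. DERIV F r :> D)" using False by auto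
  then show ?thesis unfolding deriv_def by simp
qed

lemma DERIV_zero_by_comparison:
  fixes F G :: "real \<Rightarrow> real"
  assumes "DERIV G r :> 0" "eventually (\<lambda>y. \<bar>F y - F r\<bar> \<le> \<bar>G y - G r\<bar>) (nhds r)"
  shows "DERIV F r :> 0"
proof -
  have slope_G: "((\<lambda>y. \<bar>(G y - G r) / (y - r)\<bar>) \<longlongrightarrow> 0) (at r)"
    using assms(1) by (intro tendsto_rabs_zero) (simp add: has_field_derivative_iff)
  have "eventually (\<lambda>y. norm ((F y - F r) / (y - r)) \<le> \<bar>(G y - G r) / (y - r)\<bar>) (nhds r)"
    using assms(2) by eventually_elim (simp add: abs_divide divide_right_mono)
  then have "eventually (\<lambda>y. norm ((F y - F r) / (y - r)) \<le> \<bar>(G y - G r) / (y - r)\<bar>) (at r)"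
    by (simp add: eventually_nhds_conv_at)
  then have "((\<lambda>y. (F y - F r) / (y - r)) \<longlongrightarrow> 0) (at r)"
    using slope_G by (rule Lim_null_comparison)
  then show ?thesis by (simp add: has_field_derivative_iff)
qed

lemma DERIV_affine_iff:
  fixes f :: "real \<Rightarrow> real"
  assumes "\<bar>s\<bar> = 1"
  shows "DERIV (\<lambda>y. s * f y + c) r :> D \<longleftrightarrow> DERIV f r :> s * D"
proof -
  have ss: "s * s = 1" using assms abs_mult_self_eq[of s] by simp
  show ?thesis
  proof
    assume "DERIV (\<lambda>y. s * f y + c) r :> D"
    then have "DERIV (\<lambda>y. s * (s * f y + c) - s * c) r :> s * D - 0"
      by (intro DERIV_diff DERIV_cmult DERIV_const)
    moreover have "(\<lambda>y. s * (s * f y + c) - s * c) = f" using ss by (auto simp: algebra_simps simp flip: mult.assoc)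
    ultimately show "DERIV f r :> s * D" by simp
  next
    assume "DERIV f r :> s * D"
    then have "DERIV (\<lambda>y. s * f y + c) r :> s * (s * D)" by (auto intro!: derivative_eq_intros)
    then show "DERIV (\<lambda>y. s * f y + c) r :> D" using ss by (simp flip: mult.assoc)
  qed
qed

lemma deriv_sq_pi_fold_off_corner:
  fixes f :: "real \<Rightarrow> real"
  assumes "isCont f r" "\<not> fold_corner (f r)"
  shows "(deriv (\<lambda>y. pi_fold (f y)) r)\<^sup>2 = (deriv f r)\<^sup>2"
proof -
  obtain e s c where e: "e > 0" and s: "\<bar>s\<bar> = 1"
    and affine: "\<And>x. \<bar>x - f r\<bar> < e \<Longrightarrow> pi_fold x = s * x + c"
    using pi_fold_locally_affine[OF assms(2)] by blast
  have "eventually (\<lambda>y. pi_fold (f y) = s * f y + c) (nhds r)"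
    using eventually_close_of_isCont[OF assms(1) e] by eventually_elim (rule affine)
  then have "DERIV (\<lambda>y. pi_fold (f y)) r :> D \<longleftrightarrow> DERIV (\<lambda>y. s * f y + c) r :> D" for D
    by (rule DERIV_cong_ev[OF refl _ refl])
  then have "DERIV (\<lambda>y. pi_fold (f y)) r :> D \<longleftrightarrow> DERIV f r :> s * D" for D
    using DERIV_affine_iff[OF s] by simp
  then show ?thesis using s by (rule deriv_sq_eq_if_DERIV_iff)
qed

(* ... and at corner values as long as f has no nonzero derivative there: both derivatives
   then vanish together, because the fold attains an extremum at a corner. *)
lemma deriv_sq_pi_fold_at_corner:
  fixes f :: "real \<Rightarrow> real"
  assumes cont: "isCont f r" and corner: "fold_corner (f r)"
    and no_slope: "\<And>D. DERIV f r :> D \<Longrightarrow> D = 0"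
  shows "(deriv (\<lambda>y. pi_fold (f y)) r)\<^sup>2 = (deriv f r)\<^sup>2"
proof -
  let ?G = "\<lambda>y. pi_fold (f y)"
  have "eventually (\<lambda>y. \<bar>f y - f r\<bar> < pi/2) (nhds r)"
    using eventually_close_of_isCont[OF cont, of "pi/2"] by simp
  then have same_incr: "eventually (\<lambda>y. \<bar>?G y - ?G r\<bar> = \<bar>f y - f r\<bar>) (nhds r)"
    by eventually_elim (rule pi_fold_near_corner[OF corner], simp)
  have extremal: "D = 0" if "DERIV ?G r :> D" for D
    using corner unfolding fold_corner_def
  proof
    assume "pi_fold (f r) = 0"
    then show "D = 0" using DERIV_local_min[OF that zero_less_one] pi_fold_range by simp
  next
    assume "pi_fold (f r) = pi/2"
    then show "D = 0" using DERIV_local_max[OF that zero_less_one] pi_fold_range(2) by metis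
  qed
  have "DERIV ?G r :> D \<longleftrightarrow> DERIV f r :> 1 * D" for D
  proof
    assume "DERIV ?G r :> D"
    moreover have "eventually (\<lambda>y. \<bar>f y - f r\<bar> \<le> \<bar>?G y - ?G r\<bar>) (nhds r)"
      using same_incr by eventually_elim simp
    ultimately show "DERIV f r :> 1 * D"
      using extremal DERIV_zero_by_comparison[of ?G r f] by auto
  next
    assume "DERIV f r :> 1 * D"
    moreover have "eventually (\<lambda>y. \<bar>?G y - ?G r\<bar> \<le> \<bar>f y - f r\<bar>) (nhds r)"
      using same_incr by eventually_elim simp
    ultimately show "DERIV ?G r :> D"
      using no_slope[of D] DERIV_zero_by_comparison[of f r ?G] by auto
  qed
  then show ?thesis by (rule deriv_sq_eq_if_DERIV_iff) simp
qed

(* A set of reals consisting of isolated points is countable (inject it into the rationals). *)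
lemma countable_if_isolated:
  fixes S :: "real set"
  assumes "\<And>x. x \<in> S \<Longrightarrow> \<exists>e>0. \<forall>y\<in>S. \<bar>y - x\<bar> < e \<longrightarrow> y = x"
  shows "countable S"
proof -
  obtain e where e: "\<And>x. x \<in> S \<Longrightarrow> e x > 0 \<and> (\<forall>y\<in>S. \<bar>y - x\<bar> < e x \<longrightarrow> y = x)"
    using assms by metis
  have "\<exists>q\<in>\<rat>. x < q \<and> q < x + e x" if "x \<in> S" for x
    using Rats_dense_in_real[of x "x + e x"] e[OF that] by auto
  then obtain q where q: "\<And>x. x \<in> S \<Longrightarrow> q x \<in> \<rat> \<and> x < q x \<and> q x < x + e x" by metis
  have "inj_on q S"
  proof (rule inj_onI)
    fix x y assume xy: "x \<in> S" "y \<in> S" "q x = q y"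
    show "x = y"
    proof (cases x y rule: linorder_cases)
      case less
      then show ?thesis using q[OF xy(1)] q[OF xy(2)] xy e[OF xy(1)] by auto
    next
      case greater
      then show ?thesis using q[OF xy(1)] q[OF xy(2)] xy e[OF xy(2)] by auto
    qed
  qed
  moreover have "countable (q ` S)"
    using q countable_rat countable_subset[of "q ` S" \<rat>] by auto
  ultimately show ?thesis using countable_image_inj_on by blast
qed

(* Points where f hits a uniformly separated set C with nonzero derivative are isolated,
   hence countable. Applied to the corners, this is the exceptional set of the construction. *)
lemma countable_regular_hits_of_separated_set:
  fixes f :: "real \<Rightarrow> real" and C :: "real set"
  assumes sep: "\<And>u v. u \<in> C \<Longrightarrow> v \<in> C \<Longrightarrow> \<bar>u - v\<bar> < \<delta> \<Longrightarrow> u = v" and "\<delta> > 0"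
  shows "countable {r. f r \<in> C \<and> (\<exists>D. D \<noteq> 0 \<and> DERIV f r :> D)}" (is "countable ?B")
proof (rule countable_if_isolated)
  fix x assume "x \<in> ?B"
  then obtain D where x: "f x \<in> C" "D \<noteq> 0" "DERIV f x :> D" by blast
  have "((\<lambda>y. (f y - f x) / (y - x)) \<longlongrightarrow> D) (at x)"
    using x(3) by (simp add: has_field_derivative_iff)
  then have "eventually (\<lambda>y. (f y - f x) / (y - x) \<noteq> 0) (at x)"
    using x(2) by (rule tendsto_imp_eventually_ne)
  moreover have "eventually (\<lambda>y. \<bar>f y - f x\<bar> < \<delta>) (at x)"
    using eventually_close_of_isCont[OF DERIV_isCont[OF x(3)] \<open>\<delta> > 0\<close>]
    by (simp add: eventually_nhds_conv_at)
  ultimately have "eventually (\<lambda>y. (f y - f x) / (y - x) \<noteq> 0 \<and> \<bar>f y - f x\<bar> < \<delta>) (at x)"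
    by (rule eventually_conj)
  then obtain d where d: "d > 0"
    and near: "\<And>y. y \<noteq> x \<Longrightarrow> \<bar>y - x\<bar> < d \<Longrightarrow> (f y - f x) / (y - x) \<noteq> 0 \<and> \<bar>f y - f x\<bar> < \<delta>"
    unfolding eventually_at by (auto simp: dist_real_def)
  have "y = x" if "y \<in> ?B" "\<bar>y - x\<bar> < d" for y
  proof (rule ccontr)
    assume "y \<noteq> x"
    with near that(2) have "(f y - f x) / (y - x) \<noteq> 0" "\<bar>f y - f x\<bar> < \<delta>" by auto
    moreover have "f y = f x" using sep[of "f y" "f x"] that(1) x(1) calculation(2) by blast
    ultimately show False by simp
  qed
  then show "\<exists>e>0. \<forall>y\<in>?B. \<bar>y - x\<bar> < e \<longrightarrow> y = x" using d by blast
qed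

lemma abs_cont_on_nonexpansive_comp:
  assumes "abs_cont_on S u" "\<And>x y. \<bar>h x - h y\<bar> \<le> \<bar>x - y\<bar>"
  shows "abs_cont_on S (\<lambda>s. h (u s))"
  unfolding abs_cont_on_def
proof (intro allI impI)
  fix \<epsilon> :: real assume "\<epsilon> > 0"
  then obtain \<delta> where "\<delta> > 0" and \<delta>: "\<forall>(n::nat) (x::nat \<Rightarrow> real) (y::nat \<Rightarrow> real).
        (\<forall>i<n. x i \<le> y i \<and> {x i..y i} \<subseteq> S) \<and>
        (\<forall>i<n. \<forall>j<n. i \<noteq> j \<longrightarrow> {x i<..<y i} \<inter> {x j<..<y j} = {}) \<and>
        (\<Sum>i<n. y i - x i) < \<delta>
        \<longrightarrow> (\<Sum>i<n. \<bar>u (y i) - u (x i)\<bar>) < \<epsilon>"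
    using assms(1) unfolding abs_cont_on_def by blast
  have le: "(\<Sum>i<n. \<bar>h (u (y i)) - h (u (x i))\<bar>) \<le> (\<Sum>i<n. \<bar>u (y i) - u (x i)\<bar>)" for n x y
    by (intro sum_mono assms(2))
  then show "\<exists>\<delta>>0. \<forall>(n::nat) (x::nat \<Rightarrow> real) (y::nat \<Rightarrow> real).
        (\<forall>i<n. x i \<le> y i \<and> {x i..y i} \<subseteq> S) \<and>
        (\<forall>i<n. \<forall>j<n. i \<noteq> j \<longrightarrow> {x i<..<y i} \<inter> {x j<..<y j} = {}) \<and>
        (\<Sum>i<n. y i - x i) < \<delta>
        \<longrightarrow> (\<Sum>i<n. \<bar>h (u (y i)) - h (u (x i))\<bar>) < \<epsilon>"
    using \<open>\<delta> > 0\<close> \<delta> by (intro exI[of _ \<delta>] conjI allI impI order_le_less_trans[OF le]) auto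
qed

lemma E1dens_pi_fold_off_countable:
  fixes f :: "real \<Rightarrow> real"
  assumes "continuous_on {0..} f"
  obtains B where "countable B"
    "\<And>r. 0 < r \<Longrightarrow> r \<notin> B \<Longrightarrow> E1dens \<kappa> a (\<lambda>y. pi_fold (f y)) r = E1dens \<kappa> a f r"
proof
  let ?B = "{r. f r \<in> {u. fold_corner u} \<and> (\<exists>D. D \<noteq> 0 \<and> DERIV f r :> D)}"
  show "countable ?B"
    by (rule countable_regular_hits_of_separated_set[of _ "pi/2"]) (auto intro: fold_corners_separated)
  fix r :: real assume r: "0 < r" "r \<notin> ?B"
  have cont: "isCont f r" using continuous_on_interior[OF assms, of r] r(1) by simp
  have "(deriv (\<lambda>y. pi_fold (f y)) r)\<^sup>2 = (deriv f r)\<^sup>2"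
  proof (cases "fold_corner (f r)")
    case True
    with r(2) have "D = 0" if "DERIV f r :> D" for D using that by auto
    then show ?thesis using deriv_sq_pi_fold_at_corner[OF cont True] by blast
  qed (rule deriv_sq_pi_fold_off_corner[OF cont])
  then show "E1dens \<kappa> a (\<lambda>y. pi_fold (f y)) r = E1dens \<kappa> a f r"
    unfolding E1dens_def sin_sq_pi_fold by (simp only:)
qed

lemma energies_pi_fold:
  fixes f :: "real \<Rightarrow> real"
  assumes "continuous_on {0..} f"
  shows "Efun \<kappa> a (\<lambda>y. pi_fold (f y)) g = Efun \<kappa> a f g"
    and "Lfun \<kappa> a (\<lambda>y. pi_fold (f y)) g = Lfun \<kappa> a f g"
proof -
  obtain B where B: "countable B"
    and eq: "\<And>r. 0 < r \<Longrightarrow> r \<notin> B \<Longrightarrow> E1dens \<kappa> a (\<lambda>y. pi_fold (f y)) r = E1dens \<kappa> a f r"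
    using E1dens_pi_fold_off_countable[OF assms] by blast
  have off_B: "AE r in lebesgue. r \<notin> B"
    by (rule AE_discrete_difference[OF B]) simp_all
  show "Efun \<kappa> a (\<lambda>y. pi_fold (f y)) g = Efun \<kappa> a f g"
    unfolding Efun_def
    by (rule nn_integral_cong_AE) (use off_B in \<open>eventually_elim, auto simp: eq indicator_def\<close>)
  show "Lfun \<kappa> a (\<lambda>y. pi_fold (f y)) g = Lfun \<kappa> a f g"
    unfolding Lfun_def set_lebesgue_integral_def
    by (rule integral_discrete_difference[OF B]) (auto simp: eq indicator_def)
qed

lemma admissible_pi_fold:
  assumes adm: "admissible \<kappa> \<omega> q a f g" and "0 \<le> pi - \<omega>" "pi - \<omega> \<le> pi/2"
  shows "admissible \<kappa> \<omega> q a (\<lambda>y. pi_fold (f y)) g"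
proof -
  have cont: "continuous_on {0..} f" and ac: "loc_abs_cont f"
    and start: "f 0 = 0" and lim: "(f \<longlongrightarrow> pi - \<omega>) at_top"
    using adm unfolding admissible_def by simp_all
  have "continuous_on {0..} (\<lambda>y. pi_fold (f y))"
    by (rule continuous_on_compose2[OF continuous_pi_fold cont]) auto
  moreover have "loc_abs_cont (\<lambda>y. pi_fold (f y))"
    unfolding loc_abs_cont_def
  proof (intro allI impI)
    fix c d :: real assume "0 < c" "c \<le> d"
    then have "abs_cont_on {c..d} f" using ac unfolding loc_abs_cont_def by blast
    then show "abs_cont_on {c..d} (\<lambda>y. pi_fold (f y))"
      using pi_fold_nonexpansive by (rule abs_cont_on_nonexpansive_comp)
  qed
  moreover have "pi_fold (f 0) = 0" using start pi_fold_id[of 0] by simp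
  moreover have "((\<lambda>y. pi_fold (f y)) \<longlongrightarrow> pi - \<omega>) at_top"
    using isCont_tendsto_compose[OF _ lim, of pi_fold] continuous_pi_fold pi_fold_id assms(2,3)
    by (simp add: continuous_on_eq_continuous_at)
  ultimately show ?thesis
    using adm energies_pi_fold(1)[OF cont] unfolding admissible_def by simp
qed

theorem lemma3p1:
  fixes \<kappa> \<omega> q :: real and a f g :: "real \<Rightarrow> real"
  assumes "\<kappa> > 0" and "pi/2 < \<omega>" and "\<omega> < pi" and "q > 0"
    and "constrained \<kappa> \<omega> q a f g"
  shows "\<exists>ft :: real \<Rightarrow> real. (\<forall>r\<ge>0. 0 \<le> ft r \<and> ft r \<le> pi/2) \<and>
           constrained \<kappa> \<omega> q a ft g \<and> Lfun \<kappa> a ft g \<le> Lfun \<kappa> a f g"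
proof (intro exI conjI allI impI)
  let ?ft = "\<lambda>r. pi_fold (f r)"
  have adm: "admissible \<kappa> \<omega> q a f g" using assms(5) unfolding constrained_def by simp
  show "0 \<le> ?ft r" "?ft r \<le> pi/2" for r using pi_fold_range by auto
  have "admissible \<kappa> \<omega> q a ?ft g" using admissible_pi_fold[OF adm] assms(2,3) by simp
  then show "constrained \<kappa> \<omega> q a ?ft g"
    using assms(5) unfolding constrained_def by simp
  have "continuous_on {0..} f" using adm unfolding admissible_def by simp
  then show "Lfun \<kappa> a ?ft g \<le> Lfun \<kappa> a f g" by (simp add: energies_pi_fold(2))
qed

end
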